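(* Let $\mathcal{L}_Q$ be a lattice liability network over a finite quiver $Q=(V,E,s,t)$, with payment lattices $L_v$, nominal liabilities $\ell_e$, pay-in aggregators $A_v$, distributors $D_v$ and pay-out aggregators $B_v$. Then the set of clearing sections of $\mathcal{L}_Q$ is nonempty and forms a complete lattice under the product order of $C^0=\prod_{v\in V}L_v$.
   Context: A quiver $Q=(V,E,s,t)$ consists of a vertex set $V$, an edge set $E$, and source and target maps $s,t:E\to V$ (multiple edges and self-loops are allowed); $t^{-1}(v)$ is the set of edges into $v$ and $s^{-1}(v)$ the set of edges out of $v$. A lattice liability network $\mathcal{L}_Q$ over a finite quiver $Q$ consists of: (1) for each $v\in V$ a complete lattice $L_v$ (the payment lattice), with top element $\top_v$; (2) for each $e\in E$ a nominal liability $\ell_e\in L_{s(e)}$; (3) for each $v$ a pay-in aggregator $A_v:\prod_{e\in t^{-1}(v)}L_{s(e)}\to L_v$, monotone in each coordinate; (4) for each $v$ a monotone distributor $D_v:L_v\to L_v^{s^{-1}(v)}$ and a monotone pay-out aggregator $B_v:L_v^{s^{-1}(v)}\to L_v$ with $B_v\circ D_v=\mathrm{id}_{L_v}$ and $[D_v(\top_v)]_e\le \ell_e$ for each $e\in s^{-1}(v)$. Let $C^0=\prod_{v\in V}L_v$ with the product order. For $\mathbf{x}=(x_v)\in C^0$ and $e\in E$, the edge payment is $p_e=[D_{s(e)}(x_{s(e)})]_e$. A clearing section is $\mathbf{x}\in C^0$ such that $x_v=A_v\big((p_e)_{e\in t^{-1}(v)}\big)$ for every $v\in V$. *)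

theory Defs
  imports "HOL-Algebra.Complete_Lattice" "HOL-Library.FuncSet"
begin

text \<open>
  Payment lattices: one HOL-Algebra complete lattice L v per vertex, all with
  elements in a common ambient type 'l (every family of complete lattices can be
  so represented, e.g. via a disjoint union).
\<close>

definition in_edges :: "'e set \<Rightarrow> ('e \<Rightarrow> 'v) \<Rightarrow> 'v \<Rightarrow> 'e set" where
  "in_edges E t v = {e \<in> E. t e = v}"

definition out_edges :: "'e set \<Rightarrow> ('e \<Rightarrow> 'v) \<Rightarrow> 'v \<Rightarrow> 'e set" where
  "out_edges E s v = {e \<in> E. s e = v}"

definition lattice_liability_network ::
  "'v set \<Rightarrow> 'e set \<Rightarrow> ('e \<Rightarrow> 'v) \<Rightarrow> ('e \<Rightarrow> 'v) \<Rightarrow>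
   ('v \<Rightarrow> ('l, 'm) gorder_scheme) \<Rightarrow> ('e \<Rightarrow> 'l) \<Rightarrow>
   ('v \<Rightarrow> ('e \<Rightarrow> 'l) \<Rightarrow> 'l) \<Rightarrow> ('v \<Rightarrow> 'l \<Rightarrow> ('e \<Rightarrow> 'l)) \<Rightarrow>
   ('v \<Rightarrow> ('e \<Rightarrow> 'l) \<Rightarrow> 'l) \<Rightarrow> bool" where
  "lattice_liability_network V E s t L ell A D B \<longleftrightarrow>
     \<comment> \<open>finite quiver\<close>
     finite V \<and> finite E \<and> (\<forall>e\<in>E. s e \<in> V \<and> t e \<in> V) \<and>
     \<comment> \<open>(1) payment lattices\<close>
     (\<forall>v\<in>V. complete_lattice (L v)) \<and>
     \<comment> \<open>(2) nominal liabilities\<close>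
     (\<forall>e\<in>E. ell e \<in> carrier (L (s e))) \<and>
     \<comment> \<open>(3) pay-in aggregators, monotone in each coordinate\<close>
     (\<forall>v\<in>V.
        (\<forall>p \<in> (\<Pi>\<^sub>E e\<in>in_edges E t v. carrier (L (s e))). A v p \<in> carrier (L v)) \<and>
        (\<forall>p \<in> (\<Pi>\<^sub>E e\<in>in_edges E t v. carrier (L (s e))). \<forall>e\<in>in_edges E t v.
           \<forall>y\<in>carrier (L (s e)). p e \<sqsubseteq>\<^bsub>L (s e)\<^esub> y \<longrightarrow>
             A v p \<sqsubseteq>\<^bsub>L v\<^esub> A v (p(e := y)))) \<and>
     \<comment> \<open>(4) distributors and pay-out aggregators\<close>
     (\<forall>v\<in>V.
        (\<forall>x\<in>carrier (L v). D v x \<in> (\<Pi>\<^sub>E e\<in>out_edges E s v. carrier (L v))) \<and>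
        (\<forall>x\<in>carrier (L v). \<forall>y\<in>carrier (L v). x \<sqsubseteq>\<^bsub>L v\<^esub> y \<longrightarrow>
           (\<forall>e\<in>out_edges E s v. D v x e \<sqsubseteq>\<^bsub>L v\<^esub> D v y e)) \<and>
        (\<forall>q \<in> (\<Pi>\<^sub>E e\<in>out_edges E s v. carrier (L v)). B v q \<in> carrier (L v)) \<and>
        (\<forall>q \<in> (\<Pi>\<^sub>E e\<in>out_edges E s v. carrier (L v)).
           \<forall>r \<in> (\<Pi>\<^sub>E e\<in>out_edges E s v. carrier (L v)).
           (\<forall>e\<in>out_edges E s v. q e \<sqsubseteq>\<^bsub>L v\<^esub> r e) \<longrightarrow> B v q \<sqsubseteq>\<^bsub>L v\<^esub> B v r) \<and>
        (\<forall>x\<in>carrier (L v). B v (D v x) = x) \<and>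
        (\<forall>e\<in>out_edges E s v. D v (\<top>\<^bsub>L v\<^esub>) e \<sqsubseteq>\<^bsub>L v\<^esub> ell e))"

definition cochains0 :: "'v set \<Rightarrow> ('v \<Rightarrow> ('l, 'm) gorder_scheme) \<Rightarrow> ('v \<Rightarrow> 'l) set" where
  "cochains0 V L = (\<Pi>\<^sub>E v\<in>V. carrier (L v))"

definition edge_payment :: "('e \<Rightarrow> 'v) \<Rightarrow> ('v \<Rightarrow> 'l \<Rightarrow> ('e \<Rightarrow> 'l)) \<Rightarrow> ('v \<Rightarrow> 'l) \<Rightarrow> 'e \<Rightarrow> 'l" where
  "edge_payment s D x e = D (s e) (x (s e)) e"

definition clearing_sections ::
  "'v set \<Rightarrow> 'e set \<Rightarrow> ('e \<Rightarrow> 'v) \<Rightarrow> ('e \<Rightarrow> 'v) \<Rightarrow>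
   ('v \<Rightarrow> ('l, 'm) gorder_scheme) \<Rightarrow>
   ('v \<Rightarrow> ('e \<Rightarrow> 'l) \<Rightarrow> 'l) \<Rightarrow> ('v \<Rightarrow> 'l \<Rightarrow> ('e \<Rightarrow> 'l)) \<Rightarrow> ('v \<Rightarrow> 'l) set" where
  "clearing_sections V E s t L A D =
     {x \<in> cochains0 V L. \<forall>v\<in>V.
        x v = A v (\<lambda>e\<in>in_edges E t v. edge_payment s D x e)}"

definition product_order_on ::
  "'v set \<Rightarrow> ('v \<Rightarrow> ('l, 'm) gorder_scheme) \<Rightarrow> ('v \<Rightarrow> 'l) set \<Rightarrow> ('v \<Rightarrow> 'l) gorder" where
  "product_order_on V L S =
     \<lparr> carrier = S, eq = (=), le = (\<lambda>x y. \<forall>v\<in>V. x v \<sqsubseteq>\<^bsub>L v\<^esub> y v) \<rparr>"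

end

theory Submission
  imports Defs
begin

text \<open>
  Clearing sections are the fixed points of the clearing map, which sends x to
  (A_v((p_e)_{t(e) = v}))_v, on the product C^0; this product is a complete lattice because
  infima can be taken coordinatewise. The clearing map is monotone: each edge payment is
  monotone in x because D_{s(e)} is, and A_v, being monotone in each of its finitely many
  arguments, is jointly monotone. By Knaster-Tarski the fixed points form a complete lattice,
  which is in particular nonempty. Neither the pay-out aggregators B_v nor the nominal
  liabilities enter the argument.
\<close>

lemma mono_if_mono_in_each_coordinate:
  fixes f :: "('i \<Rightarrow> 'a) \<Rightarrow> 'b" and M :: "('b, 'm) gorder_scheme"
  assumes "finite I" and "weak_partial_order M"
    and closed: "\<And>p. p \<in> (\<Pi>\<^sub>E i\<in>I. C i) \<Longrightarrow> f p \<in> carrier M"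
    and mono_at: "\<And>p i y. \<lbrakk>p \<in> (\<Pi>\<^sub>E i\<in>I. C i); i \<in> I; y \<in> C i; R i (p i) y\<rbrakk>
                    \<Longrightarrow> f p \<sqsubseteq>\<^bsub>M\<^esub> f (p(i := y))"
    and p: "p \<in> (\<Pi>\<^sub>E i\<in>I. C i)" and q: "q \<in> (\<Pi>\<^sub>E i\<in>I. C i)"
    and below: "\<And>i. i \<in> I \<Longrightarrow> R i (p i) (q i)"
  shows "f p \<sqsubseteq>\<^bsub>M\<^esub> f q"
proof -
  interpret M: weak_partial_order M by fact
  define mix where "mix K = (\<lambda>i\<in>I. if i \<in> K then q i else p i)" for K
  have mix_mem: "mix K \<in> (\<Pi>\<^sub>E i\<in>I. C i)" for K
    using p q by (auto simp: mix_def)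
  have "f p \<sqsubseteq>\<^bsub>M\<^esub> f (mix K)" if "finite K" "K \<subseteq> I" for K
    using that
  proof (induction K rule: finite_induct)
    case empty
    have "mix {} = p" using p by (auto simp: mix_def PiE_def extensional_def)
    then show ?case using closed p by simp
  next
    case (insert k K)
    then have "mix (insert k K) = (mix K)(k := q k)" and "R k (mix K k) (q k)"
      using below by (auto simp: mix_def fun_eq_iff)
    moreover have "q k \<in> C k" using q insert.prems by auto
    ultimately have "f (mix K) \<sqsubseteq>\<^bsub>M\<^esub> f (mix (insert k K))"
      using mono_at[OF mix_mem] insert.prems by simp
    moreover have "f p \<sqsubseteq>\<^bsub>M\<^esub> f (mix K)" using insert by simp
    ultimately show ?case using M.le_trans closed mix_mem p by meson
  qed
  moreover have "mix I = q" using q by (auto simp: mix_def PiE_def extensional_def)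
  ultimately show ?thesis using \<open>finite I\<close> by auto
qed

lemma weak_complete_lattice_if_complete_lattice:
  "complete_lattice L \<Longrightarrow> weak_complete_lattice L"
  by (simp add: complete_lattice_def weak_complete_lattice_def weak_complete_lattice_axioms_def
      partial_order_def complete_lattice_axioms_def)

lemma partial_order_product_order:
  assumes "\<And>v. v \<in> V \<Longrightarrow> partial_order (L v)"
  shows "partial_order (product_order_on V L (cochains0 V L))"
proof -
  have coord: "x v \<in> carrier (L v)" if "x \<in> cochains0 V L" "v \<in> V" for x v
    using that by (auto simp: cochains0_def)
  note po = partial_order.axioms(1)[OF assms]
  show ?thesis
  proof (unfold_locales, simp_all add: product_order_on_def)
    show "\<forall>v\<in>V. x v \<sqsubseteq>\<^bsub>L v\<^esub> x v" if "x \<in> cochains0 V L" for x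
      using that coord po weak_partial_order.le_refl by metis
    show "\<forall>v\<in>V. x v \<sqsubseteq>\<^bsub>L v\<^esub> z v"
      if "\<forall>v\<in>V. x v \<sqsubseteq>\<^bsub>L v\<^esub> y v" "\<forall>v\<in>V. y v \<sqsubseteq>\<^bsub>L v\<^esub> z v"
        "x \<in> cochains0 V L" "y \<in> cochains0 V L" "z \<in> cochains0 V L" for x y z
      using that coord po weak_partial_order.le_trans by metis
    show "x = y"
      if le: "\<forall>v\<in>V. x v \<sqsubseteq>\<^bsub>L v\<^esub> y v" "\<forall>v\<in>V. y v \<sqsubseteq>\<^bsub>L v\<^esub> x v"
        and x: "x \<in> cochains0 V L" and y: "y \<in> cochains0 V L" for x y
    proof -
      have "x v = y v" if "v \<in> V" for v
        using partial_order.le_antisym[OF assms[OF that]] le coord[OF x that] coord[OF y that] that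
        by blast
      with x y show "x = y" unfolding cochains0_def by (blast intro: PiE_ext)
    qed
  qed
qed

lemma complete_lattice_product_order:
  assumes "\<And>v. v \<in> V \<Longrightarrow> complete_lattice (L v)"
  shows "complete_lattice (product_order_on V L (cochains0 V L))" (is "complete_lattice ?P")
proof -
  interpret partial_order ?P
    by (rule partial_order_product_order) (use assms complete_lattice.axioms(1) in blast)
  have coord: "x v \<in> carrier (L v)" if "x \<in> carrier ?P" "v \<in> V" for x v
    using that by (auto simp: product_order_on_def cochains0_def)
  have inf: "greatest ?P (\<lambda>v\<in>V. \<Sqinter>\<^bsub>L v\<^esub> ((\<lambda>x. x v) ` X)) (Lower ?P X)"
    if X: "X \<subseteq> carrier ?P" for X
  proof (rule greatest_LowerI)
    have slice: "(\<lambda>x. x v) ` X \<subseteq> carrier (L v)" if "v \<in> V" for v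
      using X that coord by auto
    have cl: "weak_complete_lattice (L v)" if "v \<in> V" for v
      using assms[OF that] by (rule weak_complete_lattice_if_complete_lattice)
    show "X \<subseteq> carrier ?P" by fact
    show "(\<lambda>v\<in>V. \<Sqinter>\<^bsub>L v\<^esub> ((\<lambda>x. x v) ` X)) \<in> carrier ?P"
      using weak_complete_lattice.inf_closed[OF cl slice]
      by (simp add: product_order_on_def cochains0_def)
    show "(\<lambda>v\<in>V. \<Sqinter>\<^bsub>L v\<^esub> ((\<lambda>x. x v) ` X)) \<sqsubseteq>\<^bsub>?P\<^esub> x" if "x \<in> X" for x
      using weak_complete_lattice.inf_lower[OF cl slice] that by (simp add: product_order_on_def)
    show "y \<sqsubseteq>\<^bsub>?P\<^esub> (\<lambda>v\<in>V. \<Sqinter>\<^bsub>L v\<^esub> ((\<lambda>x. x v) ` X))" if "y \<in> Lower ?P X" for y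
    proof -
      have y: "y \<in> carrier ?P" and below: "\<And>x v. x \<in> X \<Longrightarrow> v \<in> V \<Longrightarrow> y v \<sqsubseteq>\<^bsub>L v\<^esub> x v"
        using that X by (auto simp: Lower_def product_order_on_def)
      have "y v \<sqsubseteq>\<^bsub>L v\<^esub> \<Sqinter>\<^bsub>L v\<^esub> ((\<lambda>x. x v) ` X)" if "v \<in> V" for v
        using weak_complete_lattice.inf_greatest[OF cl slice coord[OF y]] below that by blast
      then show ?thesis by (simp add: product_order_on_def)
    qed
  qed
  show ?thesis
  proof (rule complete_lattice_criterion1)
    show "\<exists>g. greatest ?P g (carrier ?P)"
      using inf[of "{}"] by auto
    show "\<exists>i. greatest ?P i (Lower ?P A)" if "A \<subseteq> carrier ?P" for A
      using inf[OF that] by blast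
  qed
qed

lemma complete_lattice_if_weak_complete_lattice_eq:
  assumes "weak_complete_lattice L" and "(.=\<^bsub>L\<^esub>) = (=)"
  shows "complete_lattice L"
proof -
  interpret weak_complete_lattice L by fact
  show ?thesis
    by unfold_locales (auto intro: sup_exists inf_exists simp: assms(2))
qed

locale monotone_payment_network =
  fixes V :: "'v set" and E :: "'e set" and s t :: "'e \<Rightarrow> 'v"
    and L :: "'v \<Rightarrow> ('l, 'm) gorder_scheme"
    and A :: "'v \<Rightarrow> ('e \<Rightarrow> 'l) \<Rightarrow> 'l" and D :: "'v \<Rightarrow> 'l \<Rightarrow> ('e \<Rightarrow> 'l)"
  assumes finite_edges: "finite E"
    and source_in_vertices: "e \<in> E \<Longrightarrow> s e \<in> V"
    and complete_lattice_payments: "v \<in> V \<Longrightarrow> complete_lattice (L v)"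
    and pay_in_closed:
      "\<lbrakk>v \<in> V; p \<in> (\<Pi>\<^sub>E e\<in>in_edges E t v. carrier (L (s e)))\<rbrakk> \<Longrightarrow> A v p \<in> carrier (L v)"
    and pay_in_mono:
      "\<lbrakk>v \<in> V; p \<in> (\<Pi>\<^sub>E e\<in>in_edges E t v. carrier (L (s e))); e \<in> in_edges E t v;
        y \<in> carrier (L (s e)); p e \<sqsubseteq>\<^bsub>L (s e)\<^esub> y\<rbrakk>
       \<Longrightarrow> A v p \<sqsubseteq>\<^bsub>L v\<^esub> A v (p(e := y))"
    and distributor_closed:
      "\<lbrakk>v \<in> V; x \<in> carrier (L v)\<rbrakk> \<Longrightarrow> D v x \<in> (\<Pi>\<^sub>E e\<in>out_edges E s v. carrier (L v))"
    and distributor_mono: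
      "\<lbrakk>v \<in> V; x \<in> carrier (L v); y \<in> carrier (L v); x \<sqsubseteq>\<^bsub>L v\<^esub> y; e \<in> out_edges E s v\<rbrakk>
       \<Longrightarrow> D v x e \<sqsubseteq>\<^bsub>L v\<^esub> D v y e"

lemma monotone_payment_network_if_lattice_liability_network:
  "lattice_liability_network V E s t L ell A D B \<Longrightarrow> monotone_payment_network V E s t L A D"
  by (simp add: lattice_liability_network_def monotone_payment_network_def)

context monotone_payment_network
begin

abbreviation C0 :: "('v \<Rightarrow> 'l) gorder" where
  "C0 \<equiv> product_order_on V L (cochains0 V L)"

abbreviation incoming_payments :: "('v \<Rightarrow> 'l) \<Rightarrow> 'v \<Rightarrow> 'e \<Rightarrow> 'l" where
  "incoming_payments x v \<equiv> \<lambda>e\<in>in_edges E t v. edge_payment s D x e"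

definition clearing_map :: "('v \<Rightarrow> 'l) \<Rightarrow> 'v \<Rightarrow> 'l" where
  "clearing_map x = (\<lambda>v\<in>V. A v (incoming_payments x v))"

lemma edge_payment_closed:
  assumes "x \<in> cochains0 V L" and "e \<in> E"
  shows "edge_payment s D x e \<in> carrier (L (s e))"
proof -
  have "s e \<in> V" using \<open>e \<in> E\<close> by (rule source_in_vertices)
  moreover from this have "x (s e) \<in> carrier (L (s e))"
    using assms(1) by (auto simp: cochains0_def)
  ultimately show ?thesis
    using distributor_closed \<open>e \<in> E\<close> by (auto simp: edge_payment_def out_edges_def)
qed

lemma edge_payment_mono:
  assumes "x \<in> cochains0 V L" and "y \<in> cochains0 V L" and "x \<sqsubseteq>\<^bsub>C0\<^esub> y" and "e \<in> E"
  shows "edge_payment s D x e \<sqsubseteq>\<^bsub>L (s e)\<^esub> edge_payment s D y e"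
proof -
  have "s e \<in> V" using \<open>e \<in> E\<close> by (rule source_in_vertices)
  with assms show ?thesis
    by (auto simp: edge_payment_def out_edges_def cochains0_def product_order_on_def
        intro!: distributor_mono)
qed

lemma incoming_payments_closed:
  "x \<in> cochains0 V L \<Longrightarrow> incoming_payments x v \<in> (\<Pi>\<^sub>E e\<in>in_edges E t v. carrier (L (s e)))"
  by (auto simp: in_edges_def intro: edge_payment_closed)

lemma clearing_map_closed: "clearing_map \<in> carrier C0 \<rightarrow> carrier C0"
  by (auto simp: clearing_map_def product_order_on_def cochains0_def
      intro!: pay_in_closed incoming_payments_closed)

lemma complete_lattice_C0: "complete_lattice C0"
  by (rule complete_lattice_product_order) (rule complete_lattice_payments)

lemma clearing_map_isotone: "isotone C0 C0 clearing_map"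
proof (rule isotoneI)
  show "weak_partial_order C0"
    using complete_lattice_C0 by (simp add: complete_lattice_def partial_order_def)
  then show "weak_partial_order C0" .
  fix x y
  assume x: "x \<in> carrier C0" and y: "y \<in> carrier C0" and "x \<sqsubseteq>\<^bsub>C0\<^esub> y"
  have "A v (incoming_payments x v) \<sqsubseteq>\<^bsub>L v\<^esub> A v (incoming_payments y v)" if "v \<in> V" for v
  proof (rule mono_if_mono_in_each_coordinate
      [where f = "A v" and C = "\<lambda>e. carrier (L (s e))" and R = "\<lambda>e. le (L (s e))"])
    show "finite (in_edges E t v)"
      using finite_edges by (simp add: in_edges_def)
    show "weak_partial_order (L v)"
      using complete_lattice_payments[OF \<open>v \<in> V\<close>] by (simp add: complete_lattice_def partial_order_def)
    show "incoming_payments x v \<in> (\<Pi>\<^sub>E e\<in>in_edges E t v. carrier (L (s e)))"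
      "incoming_payments y v \<in> (\<Pi>\<^sub>E e\<in>in_edges E t v. carrier (L (s e)))"
      using x y by (intro incoming_payments_closed; simp add: product_order_on_def)+
    show "incoming_payments x v e \<sqsubseteq>\<^bsub>L (s e)\<^esub> incoming_payments y v e" if "e \<in> in_edges E t v" for e
      using edge_payment_mono x y \<open>x \<sqsubseteq>\<^bsub>C0\<^esub> y\<close> that
      by (simp add: in_edges_def product_order_on_def)
  qed (use \<open>v \<in> V\<close> pay_in_closed pay_in_mono in blast)+
  then show "clearing_map x \<sqsubseteq>\<^bsub>C0\<^esub> clearing_map y"
    by (simp add: clearing_map_def product_order_on_def)
qed

lemma fps_clearing_map: "fps C0 clearing_map = clearing_sections V E s t L A D"
proof -
  have "clearing_map x = x \<longleftrightarrow> (\<forall>v\<in>V. x v = A v (incoming_payments x v))"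
    if "x \<in> cochains0 V L" for x
    using that by (auto simp: clearing_map_def cochains0_def fun_eq_iff PiE_def extensional_def)
  then show ?thesis
    by (auto simp: fps_def clearing_sections_def product_order_on_def)
qed

end

theorem theorem1:
  fixes V :: "'v set" and E :: "'e set" and s t :: "'e \<Rightarrow> 'v"
    and L :: "'v \<Rightarrow> ('l, 'm) gorder_scheme" and ell :: "'e \<Rightarrow> 'l"
    and A :: "'v \<Rightarrow> ('e \<Rightarrow> 'l) \<Rightarrow> 'l" and D :: "'v \<Rightarrow> 'l \<Rightarrow> ('e \<Rightarrow> 'l)"
    and B :: "'v \<Rightarrow> ('e \<Rightarrow> 'l) \<Rightarrow> 'l"
  assumes "lattice_liability_network V E s t L ell A D B"
  shows "clearing_sections V E s t L A D \<noteq> {} \<and>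
         complete_lattice (product_order_on V L (clearing_sections V E s t L A D))"
proof -
  interpret monotone_payment_network V E s t L A D
    using assms by (rule monotone_payment_network_if_lattice_liability_network)
  have "weak_complete_lattice (fpl C0 clearing_map)"
    using weak_complete_lattice_if_complete_lattice[OF complete_lattice_C0]
      clearing_map_closed clearing_map_isotone
    by (rule Knaster_Tarski)
  moreover have "fpl C0 clearing_map = product_order_on V L (clearing_sections V E s t L A D)"
    unfolding fps_clearing_map by (simp add: product_order_on_def)
  ultimately have "complete_lattice (product_order_on V L (clearing_sections V E s t L A D))"
    (is "complete_lattice ?S")
    by (auto intro: complete_lattice_if_weak_complete_lattice_eq simp: product_order_on_def)
  then interpret clearing: complete_lattice ?S .
  have "\<bottom>\<^bsub>?S\<^esub> \<in> clearing_sections V E s t L A D"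
    using clearing.bottom_closed by (simp add: product_order_on_def)
  then show ?thesis
    using \<open>complete_lattice ?S\<close> by blast
qed

end
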